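(* Let $\mathcal X\subset\mathbb R^d$ be convex and compact and let $f:\mathcal X\to\mathcal X$ be any function. Consider the two-player game in which both players have strategy set $\mathcal X$ and $u_1(x,y)=-\|x-y\|_2^2$, $u_2(x,y)=-\|y-f(x)\|_2^2$. Let $\mu\in\Delta(\mathcal X\times\mathcal X)$ be an $\varepsilon$-approximate normal-form correlated equilibrium of this game, and write $\mathbb E_x$ for expectation over the $x$-marginal of $\mu$. Then for every convex function $Q:\mathcal X\to\mathbb R$ that is $1$-Lipschitz with respect to $\|\cdot\|_2$, $$\mathbb E_x\big[Q(x)-Q(f(x))\big]\le 2\sqrt{\varepsilon}.$$
   Context: $\Delta(S)$ denotes the set of finite-support probability distributions on $S$. For a game with strategy sets $\mathcal X_i$ and utilities $u_i$, an $\varepsilon$-approximate normal-form correlated equilibrium is a distribution $\mu$ over strategy profiles such that $\mathbb E_{x\sim\mu}[u_i(\phi_i(x_i),x_{-i})-u_i(x)]\le\varepsilon$ for every player $i$ and every (arbitrary) map $\phi_i:\mathcal X_i\to\mathcal X_i$. *)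

theory Defs
  imports "HOL-Analysis.Analysis" "HOL-Probability.Probability"
begin

definition approx_nf_CE2 ::
  "'a set \<Rightarrow> 'b set \<Rightarrow> ('a \<Rightarrow> 'b \<Rightarrow> real) \<Rightarrow> ('a \<Rightarrow> 'b \<Rightarrow> real) \<Rightarrow> real \<Rightarrow> ('a \<times> 'b) pmf \<Rightarrow> bool"
where
  "approx_nf_CE2 X Y u1 u2 eps \<mu> \<longleftrightarrow>
     finite (set_pmf \<mu>) \<and> set_pmf \<mu> \<subseteq> X \<times> Y \<and>
     (\<forall>\<phi>. \<phi> ` X \<subseteq> X \<longrightarrow>
        measure_pmf.expectation \<mu> (\<lambda>(x, y). u1 (\<phi> x) y - u1 x y) \<le> eps) \<and>
     (\<forall>\<phi>. \<phi> ` Y \<subseteq> Y \<longrightarrow>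
        measure_pmf.expectation \<mu> (\<lambda>(x, y). u2 x (\<phi> y) - u2 x y) \<le> eps)"

end

theory Submission
  imports Defs
begin

(* For a distribution of (x, y) on X \<times> X let m a be the conditional mean of y given x = a.
   Deviating to x \<mapsto> m x gains exactly E \<parallel>x - m x\<parallel>\<^sup>2, so this is at most eps, while Jensen and the
   Lipschitz bound give E [Q x - Q y] \<le> E [Q x - Q (m x)] \<le> E \<parallel>x - m x\<parallel> \<le> sqrt eps.
   Player 1's condition yields this for (x, y) ~ \<mu>, player 2's for (y, f x); the two bounds
   telescope to E [Q x - Q (f x)] \<le> 2 sqrt eps. *)

lemma sum_sq_dist_diff_weighted_mean:
  fixes a m :: "'a::real_inner" and b :: "'c \<Rightarrow> 'a"
  assumes "(\<Sum>z\<in>T. p z *\<^sub>R b z) = sum p T *\<^sub>R m"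
  shows "(\<Sum>z\<in>T. p z * ((norm (a - b z))\<^sup>2 - (norm (m - b z))\<^sup>2)) = sum p T * (norm (a - m))\<^sup>2"
proof -
  have "(\<Sum>z\<in>T. p z * ((norm (a - b z))\<^sup>2 - (norm (m - b z))\<^sup>2))
      = (\<Sum>z\<in>T. p z * (inner a a - inner m m) - 2 * inner (a - m) (p z *\<^sub>R b z))"
    by (rule sum.cong) (auto simp: power2_norm_eq_inner inner_diff_left inner_diff_right inner_commute algebra_simps)
  also have "\<dots> = sum p T * (inner a a - inner m m) - 2 * inner (a - m) (sum p T *\<^sub>R m)"
  proof -
    have "(\<Sum>z\<in>T. inner (a - m) (p z *\<^sub>R b z)) = inner (a - m) (sum p T *\<^sub>R m)"
      by (simp only: inner_sum_right[symmetric] assms)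
    then show ?thesis
      by (simp add: sum_subtractf sum_distrib_right flip: sum_distrib_left del: inner_scaleR_right)
  qed
  also have "\<dots> = sum p T * (norm (a - m))\<^sup>2"
    by (simp add: power2_norm_eq_inner inner_diff_left inner_diff_right inner_commute algebra_simps)
  finally show ?thesis .
qed

lemma convex_lipschitz_drop_le_dist_weighted_mean:
  fixes b :: "'c \<Rightarrow> 'a::real_normed_vector"
  assumes "convex X" "convex_on X Q" "L-lipschitz_on X Q"
    and "finite T" "\<And>z. z \<in> T \<Longrightarrow> p z \<ge> 0" "sum p T > 0"
    and "\<And>z. z \<in> T \<Longrightarrow> b z \<in> X" "a \<in> X"
  defines "m \<equiv> (\<Sum>z\<in>T. (p z / sum p T) *\<^sub>R b z)"
  shows "m \<in> X" and "(\<Sum>z\<in>T. p z * (Q a - Q (b z))) \<le> sum p T * (L * dist a m)"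
proof -
  define W where "W = sum p T"
  have weights: "(\<Sum>z\<in>T. p z / W) = 1" "\<And>z. z \<in> T \<Longrightarrow> p z / W \<ge> 0"
    using assms(5,6) by (simp_all add: W_def flip: sum_divide_distrib)
  show "m \<in> X"
    unfolding m_def W_def[symmetric] by (rule convex_sum[OF assms(4,1) weights]) (use assms(7) in auto)
  have "T \<noteq> {}" using assms(6) by auto
  have "Q m \<le> (\<Sum>z\<in>T. (p z / W) * Q (b z))"
    unfolding m_def W_def[symmetric]
    by (rule convex_on_sum[OF assms(4) \<open>T \<noteq> {}\<close> assms(2) weights]) (use assms(7) in auto)
  then have jensen: "W * Q m \<le> (\<Sum>z\<in>T. p z * Q (b z))"
    using assms(6) by (simp add: W_def field_simps flip: sum_divide_distrib)
  have "Q a - Q m \<le> L * dist a m"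
    using lipschitz_onD[OF assms(3) assms(8) \<open>m \<in> X\<close>] by (simp add: dist_real_def)
  then have "W * (Q a - Q m) \<le> W * (L * dist a m)"
    using assms(6) by (simp add: W_def)
  moreover have "(\<Sum>z\<in>T. p z * (Q a - Q (b z))) = W * Q a - (\<Sum>z\<in>T. p z * Q (b z))"
    by (simp add: W_def right_diff_distrib sum_subtractf sum_distrib_left mult.commute)
  ultimately show "(\<Sum>z\<in>T. p z * (Q a - Q (b z))) \<le> sum p T * (L * dist a m)"
    using jensen by (simp add: W_def algebra_simps)
qed

lemma expectation_pmf_sum_fibers:
  fixes g :: "'a \<Rightarrow> 'b \<Rightarrow> real"
  assumes "finite (set_pmf \<nu>)"
  shows "measure_pmf.expectation \<nu> (\<lambda>(x, y). g x y)
    = (\<Sum>a\<in>fst ` set_pmf \<nu>. \<Sum>z\<in>{z \<in> set_pmf \<nu>. fst z = a}. pmf \<nu> z * g a (snd z))"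
proof -
  have "measure_pmf.expectation \<nu> (\<lambda>(x, y). g x y) = (\<Sum>z\<in>set_pmf \<nu>. pmf \<nu> z * g (fst z) (snd z))"
    by (subst integral_measure_pmf_real[OF assms]) (auto simp: mult.commute case_prod_beta)
  also have "\<dots> = (\<Sum>a\<in>fst ` set_pmf \<nu>. \<Sum>z\<in>{z \<in> set_pmf \<nu>. fst z = a}. pmf \<nu> z * g (fst z) (snd z))"
    by (rule sum.image_gen[OF assms])
  also have "\<dots> = (\<Sum>a\<in>fst ` set_pmf \<nu>. \<Sum>z\<in>{z \<in> set_pmf \<nu>. fst z = a}. pmf \<nu> z * g a (snd z))"
    by (auto intro!: sum.cong)
  finally show ?thesis .
qed

lemma expected_drop_le_sqrt_deviation_gain:
  fixes \<nu> :: "('a::real_inner \<times> 'a) pmf"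
  assumes fin: "finite (set_pmf \<nu>)" and supp: "set_pmf \<nu> \<subseteq> X \<times> X"
    and "convex X" "convex_on X Q" "L-lipschitz_on X Q"
    and gain: "\<And>\<phi>. \<phi> ` X \<subseteq> X \<Longrightarrow>
      measure_pmf.expectation \<nu> (\<lambda>(x, y). (norm (x - y))\<^sup>2 - (norm (\<phi> x - y))\<^sup>2) \<le> eps"
  shows "measure_pmf.expectation \<nu> (\<lambda>(x, y). Q x - Q y) \<le> L * sqrt eps"
proof -
  define p where "p = pmf \<nu>"
  define A where "A = fst ` set_pmf \<nu>"
  define fiber where "fiber a = {z \<in> set_pmf \<nu>. fst z = a}" for a
  define w where "w a = sum p (fiber a)" for a
  define m where "m a = (\<Sum>z\<in>fiber a. (p z / w a) *\<^sub>R snd z)" for a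
  define \<phi> where "\<phi> a = (if a \<in> A then m a else a)" for a
  have E: "measure_pmf.expectation \<nu> (\<lambda>(x, y). g x y) = (\<Sum>a\<in>A. \<Sum>z\<in>fiber a. p z * g a (snd z))"
    for g :: "'a \<Rightarrow> 'a \<Rightarrow> real"
    unfolding A_def fiber_def p_def by (rule expectation_pmf_sum_fibers[OF fin])
  have fiber_finite: "finite (fiber a)" for a
    using fin by (simp add: fiber_def)
  have fiber_X: "snd z \<in> X" if "z \<in> fiber a" for z a
    using that supp by (auto simp: fiber_def)
  have A_X: "A \<subseteq> X"
    using supp by (auto simp: A_def)
  have w_pos: "w a > 0" if "a \<in> A" for a
    unfolding w_def using that fiber_finite
    by (intro sum_pos) (auto simp: A_def fiber_def p_def pmf_positive)
  have m_X: "m a \<in> X"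
    and drop_fiber: "(\<Sum>z\<in>fiber a. p z * (Q a - Q (snd z))) \<le> w a * (L * dist a (m a))"
    if "a \<in> A" for a
    using convex_lipschitz_drop_le_dist_weighted_mean[OF assms(3-5) fiber_finite, of a p snd a]
      w_pos[OF that] A_X that fiber_X
    by (auto simp: p_def m_def w_def)
  have gain_fiber: "(\<Sum>z\<in>fiber a. p z * ((norm (a - snd z))\<^sup>2 - (norm (\<phi> a - snd z))\<^sup>2))
      = w a * (dist a (m a))\<^sup>2" if "a \<in> A" for a
  proof -
    have "(\<Sum>z\<in>fiber a. p z *\<^sub>R snd z) = w a *\<^sub>R m a"
      using w_pos[OF that] by (simp add: m_def scaleR_sum_right)
    then show ?thesis
      using sum_sq_dist_diff_weighted_mean[of p snd "fiber a" "m a" a] that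
      by (simp add: \<phi>_def w_def dist_norm)
  qed
  have "\<phi> ` X \<subseteq> X"
    using m_X by (auto simp: \<phi>_def)
  then have gain_le: "(\<Sum>a\<in>A. w a * (dist a (m a))\<^sup>2) \<le> eps"
    using gain[of \<phi>] by (simp add: E gain_fiber)
  have w_sum: "sum w A = 1"
    using E[of "\<lambda>_ _. 1"] by (simp add: w_def case_prod_unfold)
  have "A \<noteq> {}"
    using w_sum by auto
  have "(\<Sum>a\<in>A. w a * dist a (m a))\<^sup>2 \<le> (\<Sum>a\<in>A. w a * (dist a (m a))\<^sup>2)"
    using convex_on_sum[OF _ \<open>A \<noteq> {}\<close> convex_power2 w_sum] fin w_pos
    by (auto simp: A_def less_imp_le)
  then have mean_dist_le: "(\<Sum>a\<in>A. w a * dist a (m a)) \<le> sqrt eps"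
    using gain_le by (intro real_le_rsqrt) simp
  have "measure_pmf.expectation \<nu> (\<lambda>(x, y). Q x - Q y) \<le> (\<Sum>a\<in>A. w a * (L * dist a (m a)))"
    unfolding E by (intro sum_mono drop_fiber)
  also have "\<dots> = L * (\<Sum>a\<in>A. w a * dist a (m a))"
    by (simp add: sum_distrib_left algebra_simps)
  also have "\<dots> \<le> L * sqrt eps"
    using mean_dist_le lipschitz_on_nonneg[OF assms(5)] by (rule mult_left_mono)
  finally show ?thesis .
qed

theorem lemma3p2:
  fixes X :: "'a::euclidean_space set"
    and f :: "'a \<Rightarrow> 'a"
    and \<mu> :: "('a \<times> 'a) pmf"
    and eps :: real
    and Q :: "'a \<Rightarrow> real"
  assumes "convex X" and "compact X"
    and "f ` X \<subseteq> X"
    and "approx_nf_CE2 X X (\<lambda>x y. - (norm (x - y))\<^sup>2) (\<lambda>x y. - (norm (y - f x))\<^sup>2) eps \<mu>"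
    and "convex_on X Q"
    and "1-lipschitz_on X Q"
  shows "measure_pmf.expectation (map_pmf fst \<mu>) (\<lambda>x. Q x - Q (f x)) \<le> 2 * sqrt eps"
proof -
  note CE = assms(4)[unfolded approx_nf_CE2_def]
  define \<nu> where "\<nu> = map_pmf (\<lambda>(x, y). (y, f x)) \<mu>"
  have fin: "finite (set_pmf \<mu>)" and supp: "set_pmf \<mu> \<subseteq> X \<times> X"
    using CE by auto
  have drop1: "measure_pmf.expectation \<mu> (\<lambda>(x, y). Q x - Q y) \<le> 1 * sqrt eps"
  proof (rule expected_drop_le_sqrt_deviation_gain[OF fin supp assms(1,5,6)])
    fix \<phi> :: "'a \<Rightarrow> 'a" assume "\<phi> ` X \<subseteq> X"
    then show "measure_pmf.expectation \<mu> (\<lambda>(x, y). (norm (x - y))\<^sup>2 - (norm (\<phi> x - y))\<^sup>2) \<le> eps"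
      using CE by (simp add: case_prod_unfold)
  qed
  have "measure_pmf.expectation \<nu> (\<lambda>(y, z). Q y - Q z) \<le> 1 * sqrt eps"
  proof (rule expected_drop_le_sqrt_deviation_gain[OF _ _ assms(1,5,6)])
    show "finite (set_pmf \<nu>)"
      using fin by (simp add: \<nu>_def)
    show "set_pmf \<nu> \<subseteq> X \<times> X"
      using supp assms(3) by (auto simp: \<nu>_def)
    fix \<phi> :: "'a \<Rightarrow> 'a" assume "\<phi> ` X \<subseteq> X"
    then show "measure_pmf.expectation \<nu> (\<lambda>(y, z). (norm (y - z))\<^sup>2 - (norm (\<phi> y - z))\<^sup>2) \<le> eps"
      using CE by (simp add: \<nu>_def case_prod_unfold)
  qed
  then have drop2: "measure_pmf.expectation \<mu> (\<lambda>(x, y). Q y - Q (f x)) \<le> sqrt eps"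
    by (simp add: \<nu>_def case_prod_unfold)
  have "measure_pmf.expectation (map_pmf fst \<mu>) (\<lambda>x. Q x - Q (f x))
      = measure_pmf.expectation \<mu> (\<lambda>(x, y). Q x - Q y) + measure_pmf.expectation \<mu> (\<lambda>(x, y). Q y - Q (f x))"
    by (subst Bochner_Integration.integral_add[symmetric])
       (auto simp: integrable_measure_pmf_finite[OF fin] case_prod_unfold)
  with drop1 drop2 show ?thesis
    by simp
qed

end
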